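(* Let $\tilde{\mathcal L}^{\tau,\sigma_1}$ be the real Lie algebra of formal Laurent series $\xi(\lambda)=\sum_{j\le n_0}\xi_j\lambda^j$ (for some integer $n_0$ depending on $\xi$) such that $\xi_j\in\mathfrak k_1$ for $j$ even and $\xi_j\in\mathfrak p_1$ for $j$ odd, with bracket $[\sum_i\xi_i\lambda^i,\sum_j\eta_j\lambda^j]=\sum_k\big(\sum_{i+j=k}[\xi_i,\eta_j]\big)\lambda^k$. Define $$\tilde{\mathcal L}^{\tau,\sigma_1}_+=\Big\{\xi\in\tilde{\mathcal L}^{\tau,\sigma_1}:\ \xi_{-j}=\sigma_2(\xi_j)\ \text{for all } j,\ \ \xi(1):=\textstyle\sum_j\xi_j\in\mathfrak k_2'\Big\},$$ $$\tilde{\mathcal L}^{\tau,\sigma_1}_-=\Big\{\xi\in\tilde{\mathcal L}^{\tau,\sigma_1}:\ \xi_j=0\ \text{for } j>0,\ \xi_0\in\mathfrak k_1'\Big\}.$$ (Elements of $\tilde{\mathcal L}^{\tau,\sigma_1}_+$ are Laurent polynomials, so $\xi(1)$ is a finite sum.) Then $\tilde{\mathcal L}^{\tau,\sigma_1}_+$ and $\tilde{\mathcal L}^{\tau,\sigma_1}_-$ are Lie subalgebras of $\tilde{\mathcal L}^{\tau,\sigma_1}$ and $\tilde{\mathcal L}^{\tau,\sigma_1}=\tilde{\mathcal L}^{\tau,\sigma_1}_+\oplus\tilde{\mathcal L}^{\tau,\sigma_1}_-$ as a direct sum of vector spaces; i.e., every $A\in\tilde{\mathcal L}^{\tau,\sigma_1}$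 can be written uniquely as $A=\xi+\eta$ with $\xi\in\tilde{\mathcal L}^{\tau,\sigma_1}_+$, $\eta\in\tilde{\mathcal L}^{\tau,\sigma_1}_-$.
   Context: Let $\mathfrak g$ be a complex simple Lie algebra, $\tau$ a conjugate-linear involution of $\mathfrak g$, and $\sigma_1,\sigma_2$ complex-linear involutions of $\mathfrak g$, the three involutions pairwise commuting. Let $\mathfrak u=\{x\in\mathfrak g:\tau(x)=x\}$. For $i=1,2$ let $\mathfrak k_i=\{x\in\mathfrak u:\sigma_i(x)=x\}$ and $\mathfrak p_i=\{x\in\mathfrak u:\sigma_i(x)=-x\}$, so $\mathfrak u=\mathfrak k_i\oplus\mathfrak p_i$. Put $\mathfrak q_1=\mathfrak k_1\cap\mathfrak p_2$ and $\mathfrak q_2=\mathfrak k_2\cap\mathfrak p_1$. Assume: $\mathfrak k_1\cap\mathfrak k_2=\mathfrak s_1\oplus\mathfrak s_2$ for ideals $\mathfrak s_1,\mathfrak s_2$ of $\mathfrak k_1\cap\mathfrak k_2$; the subspaces $\mathfrak k_1':=\mathfrak s_2\oplus\mathfrak q_1$ and $\mathfrak k_2':=\mathfrak s_1\oplus\mathfrak q_2$ are Lie subalgebras; and $\mathfrak k_1=\mathfrak s_1\oplus\mathfrak k_1'$, $\mathfrak k_2=\mathfrak k_2'\oplus\mathfrak s_2$ as direct sums of Lie algebras (these are the Lie algebra versions of $K_1\cap K_2=S_1\times S_2$, $K_1=S_1\times K_1'$, $K_2=K_2'\times S_2$). *)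

theory Defs
  imports Complex_Main "HOL-Library.Function_Algebras"
begin

definition lie_algebra :: "(complex \<Rightarrow> 'g::ab_group_add \<Rightarrow> 'g) \<Rightarrow> ('g \<Rightarrow> 'g \<Rightarrow> 'g) \<Rightarrow> bool" where
  "lie_algebra scale br \<longleftrightarrow>
     vector_space scale \<and>
     (\<forall>x y z. br (x + y) z = br x z + br y z) \<and>
     (\<forall>x y z. br x (y + z) = br x y + br x z) \<and>
     (\<forall>c x y. br (scale c x) y = scale c (br x y)) \<and>
     (\<forall>c x y. br x (scale c y) = scale c (br x y)) \<and>
     (\<forall>x. br x x = 0) \<and>
     (\<forall>x y z. br x (br y z) + br y (br z x) + br z (br x y) = 0)"

definition lie_ideal :: "(complex \<Rightarrow> 'g::ab_group_add \<Rightarrow> 'g) \<Rightarrow> ('g \<Rightarrow> 'g \<Rightarrow> 'g) \<Rightarrow> 'g set \<Rightarrow> bool" where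
  "lie_ideal scale br I \<longleftrightarrow> module.subspace scale I \<and> (\<forall>x\<in>I. \<forall>y. br y x \<in> I)"

definition complex_simple_lie_algebra ::
  "(complex \<Rightarrow> 'g::ab_group_add \<Rightarrow> 'g) \<Rightarrow> ('g \<Rightarrow> 'g \<Rightarrow> 'g) \<Rightarrow> bool" where
  "complex_simple_lie_algebra scale br \<longleftrightarrow>
     lie_algebra scale br \<and>
     (\<exists>B. finite B \<and> module.span scale B = UNIV) \<and>
     (\<exists>x y. br x y \<noteq> 0) \<and>
     (\<forall>I. lie_ideal scale br I \<longrightarrow> I = {0} \<or> I = UNIV)"

definition conj_linear_involution ::
  "(complex \<Rightarrow> 'g::ab_group_add \<Rightarrow> 'g) \<Rightarrow> ('g \<Rightarrow> 'g \<Rightarrow> 'g) \<Rightarrow> ('g \<Rightarrow> 'g) \<Rightarrow> bool" where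
  "conj_linear_involution scale br t \<longleftrightarrow>
     (\<forall>x y. t (x + y) = t x + t y) \<and>
     (\<forall>c x. t (scale c x) = scale (cnj c) (t x)) \<and>
     (\<forall>x y. t (br x y) = br (t x) (t y)) \<and>
     (\<forall>x. t (t x) = x)"

definition linear_involution ::
  "(complex \<Rightarrow> 'g::ab_group_add \<Rightarrow> 'g) \<Rightarrow> ('g \<Rightarrow> 'g \<Rightarrow> 'g) \<Rightarrow> ('g \<Rightarrow> 'g) \<Rightarrow> bool" where
  "linear_involution scale br s \<longleftrightarrow>
     (\<forall>x y. s (x + y) = s x + s y) \<and>
     (\<forall>c x. s (scale c x) = scale c (s x)) \<and>
     (\<forall>x y. s (br x y) = br (s x) (s y)) \<and>
     (\<forall>x. s (s x) = x)"

definition real_subspace :: "(complex \<Rightarrow> 'g::ab_group_add \<Rightarrow> 'g) \<Rightarrow> 'g set \<Rightarrow> bool" where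
  "real_subspace scale S \<longleftrightarrow> 0 \<in> S \<and> (\<forall>x\<in>S. \<forall>y\<in>S. x + y \<in> S) \<and>
     (\<forall>r::real. \<forall>x\<in>S. scale (complex_of_real r) x \<in> S)"

definition real_lie_subalgebra ::
  "(complex \<Rightarrow> 'g::ab_group_add \<Rightarrow> 'g) \<Rightarrow> ('g \<Rightarrow> 'g \<Rightarrow> 'g) \<Rightarrow> 'g set \<Rightarrow> bool" where
  "real_lie_subalgebra scale br S \<longleftrightarrow> real_subspace scale S \<and> (\<forall>x\<in>S. \<forall>y\<in>S. br x y \<in> S)"

definition real_lie_ideal_of ::
  "(complex \<Rightarrow> 'g::ab_group_add \<Rightarrow> 'g) \<Rightarrow> ('g \<Rightarrow> 'g \<Rightarrow> 'g) \<Rightarrow> 'g set \<Rightarrow> 'g set \<Rightarrow> bool" where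
  "real_lie_ideal_of scale br I A \<longleftrightarrow> real_subspace scale I \<and> I \<subseteq> A \<and> (\<forall>x\<in>I. \<forall>y\<in>A. br y x \<in> I)"

definition set_sum :: "'g::ab_group_add set \<Rightarrow> 'g set \<Rightarrow> 'g set" where
  "set_sum A B = {a + b | a b. a \<in> A \<and> b \<in> B}"

definition fixset :: "('g \<Rightarrow> 'g) \<Rightarrow> 'g set" where
  "fixset f = {x. f x = x}"

definition negset :: "('g::ab_group_add \<Rightarrow> 'g) \<Rightarrow> 'g set" where
  "negset f = {x. f x = - x}"

definition twisted_laurent :: "'g::ab_group_add set \<Rightarrow> 'g set \<Rightarrow> (int \<Rightarrow> 'g) set" where
  "twisted_laurent K P = {xi. (\<exists>n0. \<forall>j>n0. xi j = 0) \<and>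
       (\<forall>j. even j \<longrightarrow> xi j \<in> K) \<and> (\<forall>j. odd j \<longrightarrow> xi j \<in> P)}"

text \<open>Bracket of Laurent series: coefficient k is the (finite) sum over i+j=k of [xi_i, eta_j];
  we sum over the indices where both factors are nonzero (finite for series bounded above).\<close>
definition laurent_br :: "('g::ab_group_add \<Rightarrow> 'g \<Rightarrow> 'g) \<Rightarrow> (int \<Rightarrow> 'g) \<Rightarrow> (int \<Rightarrow> 'g) \<Rightarrow> int \<Rightarrow> 'g" where
  "laurent_br br xi eta = (\<lambda>k. \<Sum>i | xi i \<noteq> 0 \<and> eta (k - i) \<noteq> 0. br (xi i) (eta (k - i)))"

text \<open>Evaluation at lambda = 1 (meaningful for Laurent polynomials).\<close>
definition eval_one :: "(int \<Rightarrow> 'g::comm_monoid_add) \<Rightarrow> 'g" where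
  "eval_one xi = (\<Sum>j | xi j \<noteq> 0. xi j)"

definition laurent_subalgebra ::
  "(complex \<Rightarrow> 'g::ab_group_add \<Rightarrow> 'g) \<Rightarrow> ('g \<Rightarrow> 'g \<Rightarrow> 'g) \<Rightarrow> (int \<Rightarrow> 'g) set \<Rightarrow> (int \<Rightarrow> 'g) set \<Rightarrow> bool" where
  "laurent_subalgebra scale br L S \<longleftrightarrow> S \<subseteq> L \<and> 0 \<in> S \<and>
     (\<forall>x\<in>S. \<forall>y\<in>S. x + y \<in> S) \<and>
     (\<forall>r::real. \<forall>x\<in>S. (\<lambda>j. scale (complex_of_real r) (x j)) \<in> S) \<and>
     (\<forall>x\<in>S. \<forall>y\<in>S. laurent_br br x y \<in> S)"

end

theory Submission
  imports Defs
begin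

text \<open>
  First, generalities on Laurent series over an abelian group
  with a biadditive bracket: evaluation at \<open>\<lambda> = 1\<close> is additive and multiplicative on Laurent
  polynomials, and the bracket commutes with coefficientwise reflection \<open>\<xi>(-j) = f(\<xi> j)\<close> by a
  bracket automorphism \<open>f\<close>.  Second, the twisted series with even coefficients in \<open>K\<close> and odd
  ones in \<open>P\<close> are closed under the real linear operations and the bracket whenever \<open>K \<oplus> P\<close> is \<open>\<int>/2\<close>-graded for the bracket.
  Third, in the concrete setting \<open>L+\<close> and \<open>L-\<close> are subalgebras (by the first layer), they
  intersect trivially because \<open>k1' \<inter> k2' = 0\<close>, and every series \<open>A\<close> splits: keep the positive
  part of \<open>A\<close>, mirror it with \<open>\<sigma>2\<close>, and choose the constant term using the decompositions
  \<open>k1 = s1 \<oplus> k1'\<close> and \<open>k2 = k2' \<oplus> s2\<close>.  Uniqueness follows from the trivial intersection.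
\<close>

section \<open>Real scalars and real subspaces\<close>

text \<open>The statement works with real subspaces of a complex Lie algebra; restricting the scalars
  turns them into ordinary subspaces of a real module, so the library on modules applies.\<close>

definition real_scale :: "(complex \<Rightarrow> 'g::ab_group_add \<Rightarrow> 'g) \<Rightarrow> real \<Rightarrow> 'g \<Rightarrow> 'g" where
  "real_scale scale r x = scale (complex_of_real r) x"

lemma module_real_scale:
  assumes "module scale"
  shows "module (real_scale scale)"
  using assms unfolding module_def real_scale_def by simp

lemma real_subspace_iff:
  assumes "module scale"
  shows "real_subspace scale S \<longleftrightarrow> module.subspace (real_scale scale) S"
  unfolding real_subspace_def module.subspace_def[OF module_real_scale[OF assms]] real_scale_def ..

context module
begin

lemma fixset_subspace:
  assumes "additive f" "\<And>c x. f (c *s x) = c *s f x"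
  shows "subspace (fixset f)" "subspace (negset f)"
  unfolding subspace_def fixset_def negset_def
  using additive.zero[OF assms(1)] additive.add[OF assms(1)] assms(2)
  by (auto simp: scale_right_distrib)

lemma set_sum_subset:
  assumes "subspace S" "A \<subseteq> S" "B \<subseteq> S"
  shows "set_sum A B \<subseteq> S"
  using assms unfolding set_sum_def subspace_def by blast

end

lemma subset_set_sum_left: "0 \<in> B \<Longrightarrow> A \<subseteq> set_sum A B"
  unfolding set_sum_def by force

lemma subset_set_sum_right: "0 \<in> A \<Longrightarrow> B \<subseteq> set_sum A B"
  unfolding set_sum_def by force

section \<open>Laurent series with a biadditive bracket\<close>

locale biadditive =
  fixes br :: "'g::ab_group_add \<Rightarrow> 'g \<Rightarrow> 'g"
  assumes add_left: "br (x + y) z = br x z + br y z"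
    and add_right: "br x (y + z) = br x y + br x z"
begin

sublocale left: additive "\<lambda>x. br x y" for y by standard (rule add_left)
sublocale right: additive "\<lambda>y. br x y" for x by standard (rule add_right)

lemma zero_left [simp]: "br 0 y = 0" and zero_right [simp]: "br x 0 = 0"
  by (rule left.zero, rule right.zero)

lemma minus_left [simp]: "br (- x) y = - br x y" and minus_right [simp]: "br x (- y) = - br x y"
  by (rule left.minus, rule right.minus)

lemma sum_left: "br (sum f A) y = (\<Sum>i\<in>A. br (f i) y)"
  and sum_right: "br x (sum f A) = (\<Sum>i\<in>A. br x (f i))"
  by (rule left.sum, rule right.sum)

end

lemma eval_one_eq_sum:
  assumes "finite F" "{j. xi j \<noteq> 0} \<subseteq> F"
  shows "eval_one xi = (\<Sum>j\<in>F. xi j)"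
  unfolding eval_one_def by (rule sum.mono_neutral_left) (use assms in auto)

lemma eval_one_add:
  fixes xi eta :: "int \<Rightarrow> 'g::comm_monoid_add"
  assumes "finite {j. xi j \<noteq> 0}" "finite {j. eta j \<noteq> 0}"
  shows "eval_one (xi + eta) = eval_one xi + eval_one eta"
proof -
  let ?F = "{j. xi j \<noteq> 0} \<union> {j. eta j \<noteq> 0}"
  have "finite ?F" using assms by simp
  moreover have "{j. (xi + eta) j \<noteq> 0} \<subseteq> ?F" by auto
  ultimately show ?thesis
    by (simp add: eval_one_eq_sum[of ?F] sum.distrib)
qed

lemma eval_one_map:
  assumes "additive f" "finite {j. xi j \<noteq> 0}"
  shows "eval_one (\<lambda>j. f (xi j)) = f (eval_one xi)"
proof -
  have "{j. f (xi j) \<noteq> 0} \<subseteq> {j. xi j \<noteq> 0}" using additive.zero[OF assms(1)] by auto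
  then show ?thesis
    using assms by (simp add: eval_one_eq_sum[OF assms(2)] additive.sum)
qed

text \<open>A series bounded above which is symmetric under \<open>\<xi>(-j) = f(\<xi> j)\<close> is also bounded below,
  hence a Laurent polynomial.\<close>

lemma symmetric_finite_support:
  fixes xi :: "int \<Rightarrow> 'g::zero"
  assumes bounded: "\<forall>j>n. xi j = 0" and sym: "\<And>j. xi (- j) = f (xi j)" and "f 0 = 0"
  shows "finite {j. xi j \<noteq> 0}"
proof (rule finite_subset)
  show "{j. xi j \<noteq> 0} \<subseteq> {-n..n}"
  proof
    fix j assume j: "j \<in> {j. xi j \<noteq> 0}"
    have "xi (- j) = 0" if "- j > n" using bounded that by simp
    then have "\<not> - j > n" using sym[of "- j"] j \<open>f 0 = 0\<close> by auto
    moreover have "\<not> j > n" using bounded j by auto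
    ultimately show "j \<in> {-n..n}" by simp
  qed
qed simp

lemma eval_one_symmetric_window:
  assumes "{j. xi j \<noteq> 0} \<subseteq> {- int m..int m}"
  shows "eval_one xi = xi 0 + (\<Sum>j\<in>{1..int m}. xi j + xi (- j))"
proof -
  have "(\<Sum>j\<in>{- int m..int m}. xi j) = xi 0 + (\<Sum>j\<in>{1..int m}. xi j + xi (- j))" for m
  proof (induction m)
    case (Suc m)
    have "{- int (Suc m)..int (Suc m)} = insert (int m + 1) (insert (- (int m + 1)) {- int m..int m})"
      and "{1..int (Suc m)} = insert (int m + 1) {1..int m}" by auto
    then show ?case using Suc by (simp add: algebra_simps)
  qed simp
  then show ?thesis using eval_one_eq_sum[OF _ assms] by simp
qed

lemma sum_shifted:
  fixes h :: "int \<Rightarrow> 'a::comm_monoid_add"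
  assumes "finite U" "\<And>j. j \<in> T \<Longrightarrow> i + j \<in> U" "\<And>j. j \<notin> T \<Longrightarrow> h j = 0"
  shows "(\<Sum>k\<in>U. h (k - i)) = (\<Sum>j\<in>T. h j)"
proof -
  have "(\<Sum>k\<in>U. h (k - i)) = (\<Sum>j\<in>(\<lambda>k. k - i) ` U. h j)"
    by (subst sum.reindex) (auto simp: inj_on_def)
  also have "\<dots> = (\<Sum>j\<in>T. h j)"
  proof (rule sum.mono_neutral_right)
    show "T \<subseteq> (\<lambda>k. k - i) ` U"
    proof
      fix j assume "j \<in> T"
      then show "j \<in> (\<lambda>k. k - i) ` U" by (intro image_eqI[of _ _ "i + j"]) (simp_all add: assms(2))
    qed
  qed (use assms in auto)
  finally show ?thesis .
qed

context biadditive
begin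

lemma laurent_br_nonzero:
  assumes "laurent_br br xi eta k \<noteq> 0"
  obtains i where "xi i \<noteq> 0" "eta (k - i) \<noteq> 0"
proof -
  have "{i. xi i \<noteq> 0 \<and> eta (k - i) \<noteq> 0} \<noteq> {}"
    using assms unfolding laurent_br_def by (metis sum.empty)
  then show thesis using that by blast
qed

lemma laurent_br_eq_sum:
  assumes "finite F" "{i. xi i \<noteq> 0 \<and> eta (k - i) \<noteq> 0} \<subseteq> F"
  shows "laurent_br br xi eta k = (\<Sum>i\<in>F. br (xi i) (eta (k - i)))"
  unfolding laurent_br_def by (rule sum.mono_neutral_left) (use assms in auto)

lemma laurent_br_support:
  "{k. laurent_br br xi eta k \<noteq> 0} \<subseteq> (\<lambda>(i, j). i + j) ` ({i. xi i \<noteq> 0} \<times> {j. eta j \<noteq> 0})"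
proof
  fix k assume "k \<in> {k. laurent_br br xi eta k \<noteq> 0}"
  then obtain i where "xi i \<noteq> 0" "eta (k - i) \<noteq> 0" by (auto elim: laurent_br_nonzero)
  then show "k \<in> (\<lambda>(i, j). i + j) ` ({i. xi i \<noteq> 0} \<times> {j. eta j \<noteq> 0})"
    by (intro image_eqI[of _ _ "(i, k - i)"]) auto
qed

lemma eval_one_laurent_br:
  assumes S: "finite {i. xi i \<noteq> 0}" and T: "finite {j. eta j \<noteq> 0}"
  shows "eval_one (laurent_br br xi eta) = br (eval_one xi) (eval_one eta)"
proof -
  define S T where "S = {i. xi i \<noteq> 0}" and "T = {j. eta j \<noteq> 0}"
  define U where "U = (\<lambda>(i, j). i + j) ` (S \<times> T)"
  have fin: "finite S" "finite T" "finite U" using assms by (simp_all add: S_def T_def U_def)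
  have "eval_one (laurent_br br xi eta) = (\<Sum>k\<in>U. laurent_br br xi eta k)"
    using fin(3) laurent_br_support unfolding U_def S_def T_def by (rule eval_one_eq_sum)
  also have "\<dots> = (\<Sum>k\<in>U. \<Sum>i\<in>S. br (xi i) (eta (k - i)))"
    using fin(1) by (intro sum.cong refl laurent_br_eq_sum) (auto simp: S_def)
  also have "\<dots> = (\<Sum>i\<in>S. \<Sum>k\<in>U. br (xi i) (eta (k - i)))" by (rule sum.swap)
  also have "\<dots> = (\<Sum>i\<in>S. \<Sum>j\<in>T. br (xi i) (eta j))"
  proof (rule sum.cong[OF refl])
    fix i assume "i \<in> S"
    show "(\<Sum>k\<in>U. br (xi i) (eta (k - i))) = (\<Sum>j\<in>T. br (xi i) (eta j))"
      by (rule sum_shifted[where h = "\<lambda>j. br (xi i) (eta j)"])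
        (use fin \<open>i \<in> S\<close> in \<open>auto simp: U_def T_def\<close>)
  qed
  also have "\<dots> = br (\<Sum>i\<in>S. xi i) (\<Sum>j\<in>T. eta j)" by (simp only: sum_left, simp only: sum_right)
  also have "\<dots> = br (eval_one xi) (eval_one eta)" by (simp add: eval_one_def S_def T_def)
  finally show ?thesis .
qed

text \<open>The index set of the coefficient at \<open>-k\<close> is the reflection of the one at \<open>k\<close>.\<close>

lemma laurent_br_reflect:
  assumes f: "additive f" and f_br: "\<And>x y. f (br x y) = br (f x) (f y)"
    and xi: "\<And>j. xi (- j) = f (xi j)" and eta: "\<And>j. eta (- j) = f (eta j)"
  shows "laurent_br br xi eta (- k) = f (laurent_br br xi eta k)"
proof -
  define I where "I k = {i. xi i \<noteq> 0 \<and> eta (k - i) \<noteq> 0}" for k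
  have nonzero_reflect: "xi (- j) \<noteq> 0 \<longleftrightarrow> xi j \<noteq> 0" "eta (- j) \<noteq> 0 \<longleftrightarrow> eta j \<noteq> 0" for j
    using xi[of j] xi[of "- j"] eta[of j] eta[of "- j"] additive.zero[OF f] by auto
  have "I (- k) = uminus ` I k"
  proof (rule set_eqI)
    fix i
    have "eta (- k - i) \<noteq> 0 \<longleftrightarrow> eta (k - - i) \<noteq> 0"
      using nonzero_reflect(2)[of "k + i"]
      by (simp only: minus_add_distrib diff_conv_add_uminus minus_minus)
    then show "i \<in> I (- k) \<longleftrightarrow> i \<in> uminus ` I k"
      using nonzero_reflect(1)[of i] by (force simp: I_def)
  qed
  then have "laurent_br br xi eta (- k) = (\<Sum>i\<in>I k. br (xi (- i)) (eta (- (k - i))))"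
    unfolding laurent_br_def I_def by (simp add: sum.reindex algebra_simps)
  also have "\<dots> = (\<Sum>i\<in>I k. f (br (xi i) (eta (k - i))))" by (simp only: xi eta f_br)
  also have "\<dots> = f (laurent_br br xi eta k)" by (simp add: laurent_br_def I_def additive.sum[OF f])
  finally show ?thesis .
qed

lemma laurent_br_nonpositive:
  assumes "\<forall>j>0. xi j = 0" "\<forall>j>0. eta j = 0"
  shows "\<forall>k>0. laurent_br br xi eta k = 0" "laurent_br br xi eta 0 = br (xi 0) (eta 0)"
proof -
  show "\<forall>k>0. laurent_br br xi eta k = 0"
  proof (intro allI impI, rule ccontr)
    fix k :: int assume "k > 0" and "laurent_br br xi eta k \<noteq> 0"
    then obtain i where "xi i \<noteq> 0" "eta (k - i) \<noteq> 0" by (elim laurent_br_nonzero)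
    then have "i \<le> 0" "k - i \<le> 0" using assms by (meson not_le)+
    then show False using \<open>k > 0\<close> by linarith
  qed
  have "laurent_br br xi eta 0 = (\<Sum>i\<in>{0}. br (xi i) (eta (0 - i)))"
    using assms by (intro laurent_br_eq_sum) (auto, meson neg_0_less_iff_less not_le order.antisym)
  then show "laurent_br br xi eta 0 = br (xi 0) (eta 0)" by simp
qed

end

section \<open>Twisted loop algebras of a \<open>\<int>/2\<close>-graded bracket\<close>

definition parity_piece :: "'g set \<Rightarrow> 'g set \<Rightarrow> int \<Rightarrow> 'g set" where
  "parity_piece K P j = (if even j then K else P)"

lemma parity_piece_uminus [simp]: "parity_piece K P (- j) = parity_piece K P j"
  by (simp add: parity_piece_def)

lemma twisted_laurent_iff:
  "xi \<in> twisted_laurent K P \<longleftrightarrow> (\<exists>n. \<forall>j>n. xi j = 0) \<and> (\<forall>j. xi j \<in> parity_piece K P j)"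
  unfolding twisted_laurent_def parity_piece_def by auto

locale z2_graded_bracket = biadditive br + module scale
  for br :: "'g::ab_group_add \<Rightarrow> 'g \<Rightarrow> 'g" and scale :: "real \<Rightarrow> 'g \<Rightarrow> 'g" +
  fixes K P :: "'g set"
  assumes subspace_K: "subspace K" and subspace_P: "subspace P"
    and br_graded: "x \<in> parity_piece K P i \<Longrightarrow> y \<in> parity_piece K P j \<Longrightarrow>
                    br x y \<in> parity_piece K P (i + j)"
begin

lemma subspace_piece: "subspace (parity_piece K P j)"
  by (simp add: parity_piece_def subspace_K subspace_P)

lemma twisted_pointwise:
  assumes "xi \<in> twisted_laurent K P" "eta \<in> twisted_laurent K P" "g 0 0 = 0"
    and "\<And>j x y. x \<in> parity_piece K P j \<Longrightarrow> y \<in> parity_piece K P j \<Longrightarrow> g x y \<in> parity_piece K P j"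
  shows "(\<lambda>j. g (xi j) (eta j)) \<in> twisted_laurent K P"
proof -
  obtain n m where "\<forall>j>n. xi j = 0" "\<forall>j>m. eta j = 0"
    using assms(1,2) by (auto simp: twisted_laurent_iff)
  then have "\<forall>j>max n m. g (xi j) (eta j) = 0" using assms(3) by simp
  moreover have "\<forall>j. g (xi j) (eta j) \<in> parity_piece K P j"
    using assms(1,2,4) by (auto simp: twisted_laurent_iff)
  ultimately show ?thesis unfolding twisted_laurent_iff by blast
qed

lemma twisted_zero: "0 \<in> twisted_laurent K P"
  using subspace_piece by (auto simp: twisted_laurent_iff subspace_0)

lemma twisted_add:
  "xi \<in> twisted_laurent K P \<Longrightarrow> eta \<in> twisted_laurent K P \<Longrightarrow> xi + eta \<in> twisted_laurent K P"
  using twisted_pointwise[of xi eta "(+)"] subspace_piece by (simp add: plus_fun_def subspace_add)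

lemma twisted_diff:
  "xi \<in> twisted_laurent K P \<Longrightarrow> eta \<in> twisted_laurent K P \<Longrightarrow> xi - eta \<in> twisted_laurent K P"
  using twisted_pointwise[of xi eta "(-)"] subspace_piece by (simp add: fun_diff_def subspace_diff)

lemma twisted_scale: "xi \<in> twisted_laurent K P \<Longrightarrow> (\<lambda>j. scale r (xi j)) \<in> twisted_laurent K P"
  using twisted_pointwise[of xi xi "\<lambda>x y. scale r x"] subspace_piece by (simp add: subspace_scale)

lemma twisted_br:
  assumes "xi \<in> twisted_laurent K P" "eta \<in> twisted_laurent K P"
  shows "laurent_br br xi eta \<in> twisted_laurent K P"
proof -
  obtain n m where n: "\<forall>j>n. xi j = 0" and m: "\<forall>j>m. eta j = 0"
    and xi: "\<forall>j. xi j \<in> parity_piece K P j" and eta: "\<forall>j. eta j \<in> parity_piece K P j"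
    using assms by (auto simp: twisted_laurent_iff)
  have "laurent_br br xi eta k = 0" if "k > n + m" for k
  proof (rule ccontr)
    assume "laurent_br br xi eta k \<noteq> 0"
    then obtain i where "xi i \<noteq> 0" "eta (k - i) \<noteq> 0" by (elim laurent_br_nonzero)
    then have "i \<le> n" "k - i \<le> m" using n m by (meson not_le)+
    then show False using that by linarith
  qed
  moreover have "laurent_br br xi eta k \<in> parity_piece K P k" for k
    unfolding laurent_br_def
  proof (rule subspace_sum[OF subspace_piece])
    fix i
    show "br (xi i) (eta (k - i)) \<in> parity_piece K P k"
      using br_graded[OF xi[rule_format, of i] eta[rule_format, of "k - i"]] by simp
  qed
  ultimately show ?thesis by (auto simp: twisted_laurent_iff)
qed

end

lemma laurent_subalgebra_diff:
  assumes "module scale" "laurent_subalgebra scale br L S" "xi \<in> S" "eta \<in> S"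
  shows "xi - eta \<in> S"
proof -
  have "(\<lambda>j. scale (complex_of_real (- 1)) (eta j)) = - eta"
    using module.scale_minus_left[OF assms(1)] module.scale_one[OF assms(1)] by (simp add: fun_eq_iff)
  then have "- eta \<in> S" using assms(2,4) unfolding laurent_subalgebra_def by metis
  then show ?thesis using assms(2,3) unfolding laurent_subalgebra_def by (metis diff_conv_add_uminus)
qed

section \<open>The splitting of the twisted loop algebra\<close>

text \<open>The data of the theorem that the argument actually uses: a complex Lie algebra with a
  conjugate-linear involution \<open>\<tau>\<close>, commuting linear involutions \<open>\<sigma>1\<close>, \<open>\<sigma>2\<close>, and the
  decompositions \<open>k1 \<inter> k2 = s1 \<oplus> s2\<close>, \<open>k1 = s1 \<oplus> k1'\<close>, \<open>k2 = k2' \<oplus> s2\<close> with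
  \<open>k1' = s2 \<oplus> q1\<close> and \<open>k2' = s1 \<oplus> q2\<close> subalgebras.\<close>

locale twisted_loop_splitting =
  fixes scale :: "complex \<Rightarrow> 'g::ab_group_add \<Rightarrow> 'g"
    and br :: "'g \<Rightarrow> 'g \<Rightarrow> 'g"
    and tau sig1 sig2 :: "'g \<Rightarrow> 'g"
    and s1 s2 :: "'g set"
  assumes lie: "lie_algebra scale br"
    and tau_involution: "conj_linear_involution scale br tau"
    and sig1_involution: "linear_involution scale br sig1"
    and sig2_involution: "linear_involution scale br sig2"
    and sig1_sig2: "\<forall>x. sig1 (sig2 x) = sig2 (sig1 x)"
    and sig2_tau: "\<forall>x. sig2 (tau x) = tau (sig2 x)"
    and s1_subspace: "real_subspace scale s1"
    and s2_subspace: "real_subspace scale s2"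
    and k12_sum: "fixset tau \<inter> fixset sig1 \<inter> fixset sig2 = set_sum s1 s2"
    and k1'_subalgebra: "real_lie_subalgebra scale br
                           (set_sum s2 (fixset tau \<inter> fixset sig1 \<inter> negset sig2))"
    and k2'_subalgebra: "real_lie_subalgebra scale br
                           (set_sum s1 (fixset tau \<inter> fixset sig2 \<inter> negset sig1))"
    and k1_sum: "fixset tau \<inter> fixset sig1 =
                   set_sum s1 (set_sum s2 (fixset tau \<inter> fixset sig1 \<inter> negset sig2))"
    and k1_direct: "s1 \<inter> set_sum s2 (fixset tau \<inter> fixset sig1 \<inter> negset sig2) = {0}"
    and k2_sum: "fixset tau \<inter> fixset sig2 =
                   set_sum (set_sum s1 (fixset tau \<inter> fixset sig2 \<inter> negset sig1)) s2"
    and k2_direct: "set_sum s1 (fixset tau \<inter> fixset sig2 \<inter> negset sig1) \<inter> s2 = {0}"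
begin

abbreviation "K1 \<equiv> fixset tau \<inter> fixset sig1"
abbreviation "P1 \<equiv> fixset tau \<inter> negset sig1"
abbreviation "K12 \<equiv> fixset tau \<inter> fixset sig1 \<inter> fixset sig2"
abbreviation "k1' \<equiv> set_sum s2 (fixset tau \<inter> fixset sig1 \<inter> negset sig2)"
abbreviation "k2' \<equiv> set_sum s1 (fixset tau \<inter> fixset sig2 \<inter> negset sig1)"
abbreviation "loops \<equiv> twisted_laurent K1 P1"
abbreviation "Lplus \<equiv> {xi \<in> loops. (\<forall>j. xi (- j) = sig2 (xi j)) \<and> eval_one xi \<in> k2'}"
abbreviation "Lminus \<equiv> {xi \<in> loops. (\<forall>j>0. xi j = 0) \<and> xi 0 \<in> k1'}"

lemma module_scale: "module scale"
proof -
  have "vector_space scale" using lie unfolding lie_algebra_def by blast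
  then show ?thesis unfolding vector_space_def module_def .
qed

sublocale bracket: biadditive br
  using lie unfolding lie_algebra_def by unfold_locales blast+

sublocale real: module "real_scale scale"
  by (rule module_real_scale[OF module_scale])

sublocale tau: additive tau
  using tau_involution unfolding conj_linear_involution_def by unfold_locales blast
sublocale sig1: additive sig1
  using sig1_involution unfolding linear_involution_def by unfold_locales blast
sublocale sig2: additive sig2
  using sig2_involution unfolding linear_involution_def by unfold_locales blast

declare tau.zero [simp] sig1.zero [simp] sig2.zero [simp]
  tau.add [simp] sig1.add [simp] sig2.add [simp]

lemma scale_zero [simp]: "scale c 0 = 0"
  by (rule module.scale_zero_right[OF module_scale])

lemma commute: "sig1 (sig2 x) = sig2 (sig1 x)" "tau (sig2 x) = sig2 (tau x)"
  using sig1_sig2 sig2_tau by simp_all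

lemma real_linear:
  "tau (real_scale scale r x) = real_scale scale r (tau x)"
  "sig1 (real_scale scale r x) = real_scale scale r (sig1 x)"
  "sig2 (real_scale scale r x) = real_scale scale r (sig2 x)"
  using tau_involution sig1_involution sig2_involution
  unfolding conj_linear_involution_def linear_involution_def real_scale_def by simp_all

lemma bracket_hom:
  "tau (br x y) = br (tau x) (tau y)"
  "sig1 (br x y) = br (sig1 x) (sig1 y)"
  "sig2 (br x y) = br (sig2 x) (sig2 y)"
  using tau_involution sig1_involution sig2_involution
  unfolding conj_linear_involution_def linear_involution_def by simp_all

lemma sig2_sig2 [simp]: "sig2 (sig2 x) = x"
  using sig2_involution unfolding linear_involution_def by simp

lemma subspace_eigenspaces:
  "real.subspace (fixset tau)" "real.subspace (fixset sig1)" "real.subspace (negset sig1)"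
  "real.subspace (fixset sig2)" "real.subspace (negset sig2)"
  using real.fixset_subspace[OF tau.additive_axioms real_linear(1)]
    real.fixset_subspace[OF sig1.additive_axioms real_linear(2)]
    real.fixset_subspace[OF sig2.additive_axioms real_linear(3)]
  by simp_all

lemma subspace_summands:
  "real.subspace s1" "real.subspace s2" "real.subspace k1'" "real.subspace k2'"
  using s1_subspace s2_subspace k1'_subalgebra k2'_subalgebra
  by (simp_all add: real_subspace_iff[OF module_scale, symmetric] real_lie_subalgebra_def)

lemma zero_mem [simp]: "0 \<in> s1" "0 \<in> s2" "0 \<in> k1'" "0 \<in> k2'"
  using subspace_summands by (simp_all add: real.subspace_0)

lemma summands_subset:
  "s1 \<subseteq> K12" "s2 \<subseteq> K12" "s1 \<subseteq> k2'" "s2 \<subseteq> k1'"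
  "k1' \<subseteq> fixset sig1" "k2' \<subseteq> fixset tau \<inter> fixset sig2"
proof -
  have zero: "0 \<in> fixset tau \<inter> fixset sig1 \<inter> negset sig2" "0 \<in> fixset tau \<inter> fixset sig2 \<inter> negset sig1"
    by (simp_all add: fixset_def negset_def)
  show s1: "s1 \<subseteq> K12" and s2: "s2 \<subseteq> K12"
    unfolding k12_sum by (simp_all add: subset_set_sum_left subset_set_sum_right)
  show "s1 \<subseteq> k2'" "s2 \<subseteq> k1'" using zero by (simp_all add: subset_set_sum_left)
  show "k1' \<subseteq> fixset sig1"
    using s2 by (intro real.set_sum_subset subspace_eigenspaces) auto
  show "k2' \<subseteq> fixset tau \<inter> fixset sig2"
    using s1 by (intro real.set_sum_subset real.subspace_inter subspace_eigenspaces) auto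
qed

text \<open>The two complements intersect trivially: a common element lies in
  \<open>K12 = s1 \<oplus> s2\<close>, and the directness of \<open>k1 = s1 \<oplus> k1'\<close>, \<open>k2 = k2' \<oplus> s2\<close> kills both parts.\<close>

lemma k1'_k2'_trivial:
  assumes "x \<in> k1'" "x \<in> k2'"
  shows "x = 0"
proof -
  have "x \<in> K12" using assms summands_subset(5,6) by blast
  then obtain c1 c2 where c1: "c1 \<in> s1" and c2: "c2 \<in> s2" and x: "x = c1 + c2"
    unfolding k12_sum set_sum_def by blast
  have "c1 = x - c2" using x by simp
  then have "c1 \<in> k1'"
    using assms(1) c2 summands_subset(4) real.subspace_diff[OF subspace_summands(3)] by blast
  then have "c1 = 0" using c1 k1_direct by blast
  then have "x \<in> s2" using x c2 by simp
  then show "x = 0" using assms(2) k2_direct by blast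
qed

lemma additive_real_scale: "additive (real_scale scale r)"
  by unfold_locales (rule real.scale_right_distrib)

text \<open>The twisted loop algebra of \<open>k1 \<oplus> p1\<close>: membership in the graded pieces is described by
  the eigenvalues of \<open>\<tau>\<close> and \<open>\<sigma>1\<close>, which multiply under the bracket.\<close>

lemma piece_iff: "x \<in> parity_piece K1 P1 j \<longleftrightarrow> tau x = x \<and> sig1 x = (if even j then x else - x)"
  by (simp add: parity_piece_def fixset_def negset_def)

sublocale loop: z2_graded_bracket br "real_scale scale" K1 P1
proof unfold_locales
  show "real.subspace K1" "real.subspace P1"
    by (intro real.subspace_inter subspace_eigenspaces)+
  show "br x y \<in> parity_piece K1 P1 (i + j)"
    if "x \<in> parity_piece K1 P1 i" "y \<in> parity_piece K1 P1 j" for x y i j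
    using that by (cases "even i"; cases "even j"; simp add: piece_iff bracket_hom)
qed

text \<open>Since \<open>\<sigma>2\<close> commutes with \<open>\<tau>\<close> and \<open>\<sigma>1\<close>, it preserves every graded piece.\<close>

lemma sig2_piece: "x \<in> parity_piece K1 P1 j \<Longrightarrow> sig2 x \<in> parity_piece K1 P1 j"
  by (simp add: piece_iff commute sig2.minus)

lemma symmetric_finite:
  assumes "xi \<in> loops" "\<forall>j. xi (- j) = sig2 (xi j)"
  shows "finite {j. xi j \<noteq> 0}"
  using assms symmetric_finite_support[of _ xi sig2] by (auto simp: twisted_laurent_iff)

text \<open>\<open>L+\<close> is a subalgebra: symmetry is preserved by the reflection lemma, and the condition
  \<open>\<xi>(1) \<in> k2'\<close> because evaluation at \<open>1\<close> is additive and multiplicative.\<close>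

lemma Lplus_subalgebra: "laurent_subalgebra scale br loops Lplus"
  unfolding laurent_subalgebra_def
proof (intro conjI ballI allI)
  show "Lplus \<subseteq> loops" by blast
  show "0 \<in> Lplus" using loop.twisted_zero by (simp add: eval_one_def)
next
  fix xi eta assume xi: "xi \<in> Lplus" and eta: "eta \<in> Lplus"
  then have fin: "finite {j. xi j \<noteq> 0}" "finite {j. eta j \<noteq> 0}" by (simp_all add: symmetric_finite)
  show "xi + eta \<in> Lplus"
    using xi eta loop.twisted_add real.subspace_add[OF subspace_summands(4)]
    by (simp add: eval_one_add[OF fin])
  show "laurent_br br xi eta \<in> Lplus"
    using xi eta loop.twisted_br k2'_subalgebra
      bracket.laurent_br_reflect[OF sig2.additive_axioms bracket_hom(3)]
    by (simp add: bracket.eval_one_laurent_br[OF fin] real_lie_subalgebra_def)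
next
  fix r :: real and xi assume xi: "xi \<in> Lplus"
  then have "finite {j. xi j \<noteq> 0}" by (simp add: symmetric_finite)
  then have "eval_one (\<lambda>j. real_scale scale r (xi j)) = real_scale scale r (eval_one xi)"
    by (rule eval_one_map[OF additive_real_scale])
  then show "(\<lambda>j. scale (complex_of_real r) (xi j)) \<in> Lplus"
    using xi loop.twisted_scale[of xi r] real.subspace_scale[OF subspace_summands(4)] real_linear(3)
    by (simp add: real_scale_def)
qed

text \<open>\<open>L-\<close> is a subalgebra: the constant term of a bracket of series without positive powers
  is the bracket of the constant terms.\<close>

lemma Lminus_subalgebra: "laurent_subalgebra scale br loops Lminus"
  unfolding laurent_subalgebra_def
proof (intro conjI ballI allI)
  show "Lminus \<subseteq> loops" by blast
  show "0 \<in> Lminus" using loop.twisted_zero by simp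
next
  fix xi eta assume xi: "xi \<in> Lminus" and eta: "eta \<in> Lminus"
  show "xi + eta \<in> Lminus"
    using xi eta loop.twisted_add real.subspace_add[OF subspace_summands(3)] by simp
  show "laurent_br br xi eta \<in> Lminus"
    using xi eta loop.twisted_br k1'_subalgebra bracket.laurent_br_nonpositive[of xi eta]
    by (simp add: real_lie_subalgebra_def)
next
  fix r :: real and xi assume "xi \<in> Lminus"
  then show "(\<lambda>j. scale (complex_of_real r) (xi j)) \<in> Lminus"
    using loop.twisted_scale[of xi r] real.subspace_scale[OF subspace_summands(3)]
    by (simp add: real_scale_def)
qed

text \<open>An element of \<open>L+ \<inter> L-\<close> is concentrated in degree \<open>0\<close>, where its value lies in \<open>k1' \<inter> k2'\<close>.\<close>

lemma Lplus_Lminus_trivial: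
  assumes plus: "xi \<in> Lplus" and minus: "xi \<in> Lminus"
  shows "xi = 0"
proof -
  have pos: "xi j = 0" if "j > 0" for j using minus that by simp
  have neg: "xi j = 0" if "j < 0" for j
  proof -
    have "xi (- (- j)) = sig2 (xi (- j))" using plus by blast
    then show ?thesis using pos[of "- j"] that by simp
  qed
  have "{j. xi j \<noteq> 0} \<subseteq> {0}"
  proof
    fix j assume "j \<in> {j. xi j \<noteq> 0}"
    then show "j \<in> {0}" by (cases j "0::int" rule: linorder_cases) (use pos neg in auto)
  qed
  then have "eval_one xi = xi 0" by (simp add: eval_one_eq_sum[of "{0}"])
  then have zero: "xi 0 = 0" using plus minus k1'_k2'_trivial by simp
  have "xi j = 0" for j by (cases j "0::int" rule: linorder_cases) (use pos neg zero in auto)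
  then show ?thesis by (simp add: fun_eq_iff)
qed

definition sig2_extension :: "(int \<Rightarrow> 'g) \<Rightarrow> 'g \<Rightarrow> int \<Rightarrow> 'g" where
  "sig2_extension A x0 j = (if 0 < j then A j else if j < 0 then sig2 (A (- j)) else x0)"

lemma sig2_extension_symmetric:
  assumes "sig2 x0 = x0"
  shows "sig2_extension A x0 (- j) = sig2 (sig2_extension A x0 j)"
  using assms by (simp add: sig2_extension_def)

lemma sig2_extension_loops:
  assumes "A \<in> loops" "x0 \<in> K1"
  shows "sig2_extension A x0 \<in> loops"
proof -
  obtain n where n: "\<forall>j>n. A j = 0" and A: "\<forall>j. A j \<in> parity_piece K1 P1 j"
    using assms(1) by (auto simp: twisted_laurent_iff)
  have "\<forall>j>max n 0. sig2_extension A x0 j = 0" using n by (simp add: sig2_extension_def)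
  moreover have "sig2_extension A x0 j \<in> parity_piece K1 P1 j" for j
  proof -
    consider "j > 0" | "j < 0" | "j = 0" by linarith
    then show ?thesis
    proof cases
      case 2
      then show ?thesis using sig2_piece[OF A[rule_format, of "- j"]] by (simp add: sig2_extension_def)
    qed (use A assms(2) in \<open>simp_all add: sig2_extension_def parity_piece_def\<close>)
  qed
  ultimately show ?thesis unfolding twisted_laurent_iff by blast
qed

lemma eval_one_sig2_extension:
  assumes "\<forall>j>int m. A j = 0"
  shows "eval_one (sig2_extension A x0) = x0 + (\<Sum>j\<in>{1..int m}. A j + sig2 (A j))"
proof -
  have "{j. sig2_extension A x0 j \<noteq> 0} \<subseteq> {- int m..int m}"
  proof
    fix j assume "j \<in> {j. sig2_extension A x0 j \<noteq> 0}"
    then have "\<not> j > int m" "\<not> - j > int m" using assms by (auto simp: sig2_extension_def)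
    then show "j \<in> {- int m..int m}" by simp
  qed
  then show ?thesis by (simp add: eval_one_symmetric_window sig2_extension_def)
qed

lemma fold_tail: "x \<in> fixset tau \<Longrightarrow> x + sig2 x \<in> fixset tau \<inter> fixset sig2"
  by (simp add: fixset_def commute add.commute)

text \<open>Write the folded positive part as \<open>B = k + b2\<close> with
  \<open>k \<in> k2'\<close>, \<open>b2 \<in> s2\<close>, and \<open>A 0 = a1 + a'\<close> with \<open>a1 \<in> s1\<close>, \<open>a' \<in> k1'\<close>; the constant term
  \<open>x0 = a1 - b2\<close> makes \<open>\<xi>(1) = a1 + k \<in> k2'\<close> and leaves \<open>a' + b2 \<in> k1'\<close> for \<open>A - \<xi>\<close>.\<close>

lemma splitting_exists:
  assumes A: "A \<in> loops"
  shows "\<exists>xi\<in>Lplus. \<exists>eta\<in>Lminus. A = xi + eta"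
proof -
  obtain n where n: "\<forall>j>n. A j = 0" and A_piece: "\<forall>j. A j \<in> parity_piece K1 P1 j"
    using A by (auto simp: twisted_laurent_iff)
  define m where "m = nat (max n 0)"
  have m: "\<forall>j>int m. A j = 0" using n by (simp add: m_def)
  define B where "B = (\<Sum>j\<in>{1..int m}. A j + sig2 (A j))"
  have "A j + sig2 (A j) \<in> fixset tau \<inter> fixset sig2" for j
    using A_piece[rule_format, of j] unfolding piece_iff by (intro fold_tail) (simp add: fixset_def)
  then have "B \<in> fixset tau \<inter> fixset sig2"
    unfolding B_def by (rule real.subspace_sum[OF real.subspace_inter[OF subspace_eigenspaces(1,4)]])
  then have "B \<in> set_sum k2' s2" by (subst (asm) k2_sum)
  then obtain k b2 where k: "k \<in> k2'" and b2: "b2 \<in> s2" and B: "B = k + b2"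
    unfolding set_sum_def by blast
  have "A 0 \<in> K1" using A_piece[rule_format, of 0] by (simp add: parity_piece_def)
  then have "A 0 \<in> set_sum s1 k1'" by (subst (asm) k1_sum)
  then obtain a1 a' where a1: "a1 \<in> s1" and a': "a' \<in> k1'" and A0: "A 0 = a1 + a'"
    unfolding set_sum_def by blast
  define x0 where "x0 = a1 - b2"
  have "real.subspace K12"
    using subspace_eigenspaces by (simp add: real.subspace_inter)
  moreover have "a1 \<in> K12" "b2 \<in> K12" using a1 b2 summands_subset(1,2) by blast+
  ultimately have x0: "x0 \<in> K12" unfolding x0_def by (rule real.subspace_diff)
  define xi where "xi = sig2_extension A x0"
  have "eval_one xi = a1 + k"
    using eval_one_sig2_extension[OF m] by (simp add: xi_def B_def[symmetric] B x0_def)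
  also have "\<dots> \<in> k2'"
    using a1 k summands_subset(3) by (intro real.subspace_add[OF subspace_summands(4)]) auto
  finally have "xi \<in> Lplus"
    using sig2_extension_loops[OF A] sig2_extension_symmetric x0
    unfolding xi_def by (simp add: fixset_def)
  moreover have "A - xi \<in> Lminus"
  proof -
    have "(A - xi) 0 = a' + b2" using A0 by (simp add: xi_def sig2_extension_def x0_def)
    moreover have "a' + b2 \<in> k1'"
      using a' b2 summands_subset(4) real.subspace_add[OF subspace_summands(3)] by blast
    ultimately show ?thesis
      using loop.twisted_diff[OF A] \<open>xi \<in> Lplus\<close> by (simp add: xi_def sig2_extension_def)
  qed
  moreover have "A = xi + (A - xi)" by simp
  ultimately show ?thesis by blast
qed

text \<open>Uniqueness: the difference of two splittings lies in \<open>L+ \<inter> L- = 0\<close>.\<close>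

lemma splitting_unique:
  assumes "xi \<in> Lplus" "xi' \<in> Lplus" "eta \<in> Lminus" "eta' \<in> Lminus" "xi + eta = xi' + eta'"
  shows "xi = xi'" "eta = eta'"
proof -
  have "xi - xi' \<in> Lplus"
    by (rule laurent_subalgebra_diff[OF module_scale Lplus_subalgebra assms(1,2)])
  moreover have "eta' - eta \<in> Lminus"
    by (rule laurent_subalgebra_diff[OF module_scale Lminus_subalgebra assms(4,3)])
  moreover have "xi - xi' = eta' - eta" using assms(5) by (simp add: algebra_simps)
  ultimately have "xi - xi' = 0" using Lplus_Lminus_trivial[of "xi - xi'"] by simp
  then show "xi = xi'" by simp
  then show "eta = eta'" using assms(5) by simp
qed

theorem splitting:
  "laurent_subalgebra scale br loops Lplus \<and> laurent_subalgebra scale br loops Lminus \<and>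
   (\<forall>A\<in>loops. \<exists>!p. fst p \<in> Lplus \<and> snd p \<in> Lminus \<and> A = fst p + snd p)"
proof -
  have "\<exists>!p. fst p \<in> Lplus \<and> snd p \<in> Lminus \<and> A = fst p + snd p" if A_loop: "A \<in> loops" for A
  proof -
    obtain xi eta where xi: "xi \<in> Lplus" and eta: "eta \<in> Lminus" and A: "A = xi + eta"
      using splitting_exists[OF A_loop] by blast
    show ?thesis
    proof (rule ex1I[of _ "(xi, eta)"])
      show "fst (xi, eta) \<in> Lplus \<and> snd (xi, eta) \<in> Lminus \<and> A = fst (xi, eta) + snd (xi, eta)"
        using xi eta A by simp
      fix p assume p: "fst p \<in> Lplus \<and> snd p \<in> Lminus \<and> A = fst p + snd p"
      then have "fst p + snd p = xi + eta" using A by simp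
      then have "fst p = xi" "snd p = eta" using splitting_unique xi eta p by blast+
      then show "p = (xi, eta)" by (simp add: prod_eq_iff)
    qed
  qed
  then show ?thesis using Lplus_subalgebra Lminus_subalgebra by blast
qed

end

theorem mainTheorem2:
  fixes scale :: "complex \<Rightarrow> 'g::ab_group_add \<Rightarrow> 'g"
    and br :: "'g \<Rightarrow> 'g \<Rightarrow> 'g"
    and tau sig1 sig2 :: "'g \<Rightarrow> 'g"
    and s1 s2 :: "'g set"
  assumes g: "complex_simple_lie_algebra scale br"
    and tau: "conj_linear_involution scale br tau"
    and sig1: "linear_involution scale br sig1"
    and sig2: "linear_involution scale br sig2"
    and comm12: "\<forall>x. sig1 (sig2 x) = sig2 (sig1 x)"
    and comm1t: "\<forall>x. sig1 (tau x) = tau (sig1 x)"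
    and comm2t: "\<forall>x. sig2 (tau x) = tau (sig2 x)"
    and s1_ideal: "real_lie_ideal_of scale br s1 (fixset tau \<inter> fixset sig1 \<inter> fixset sig2)"
    and s2_ideal: "real_lie_ideal_of scale br s2 (fixset tau \<inter> fixset sig1 \<inter> fixset sig2)"
    and k12_sum: "fixset tau \<inter> fixset sig1 \<inter> fixset sig2 = set_sum s1 s2"
    and k12_direct: "s1 \<inter> s2 = {0}"
    and k1'_sub: "real_lie_subalgebra scale br
                    (set_sum s2 (fixset tau \<inter> fixset sig1 \<inter> negset sig2))"
    and k2'_sub: "real_lie_subalgebra scale br
                    (set_sum s1 (fixset tau \<inter> fixset sig2 \<inter> negset sig1))"
    and k1_sum: "fixset tau \<inter> fixset sig1 =
                   set_sum s1 (set_sum s2 (fixset tau \<inter> fixset sig1 \<inter> negset sig2))"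
    and k1_direct: "s1 \<inter> set_sum s2 (fixset tau \<inter> fixset sig1 \<inter> negset sig2) = {0}"
    and k1_comm: "\<forall>a\<in>s1. \<forall>b\<in>set_sum s2 (fixset tau \<inter> fixset sig1 \<inter> negset sig2). br a b = 0"
    and k2_sum: "fixset tau \<inter> fixset sig2 =
                   set_sum (set_sum s1 (fixset tau \<inter> fixset sig2 \<inter> negset sig1)) s2"
    and k2_direct: "set_sum s1 (fixset tau \<inter> fixset sig2 \<inter> negset sig1) \<inter> s2 = {0}"
    and k2_comm: "\<forall>a\<in>set_sum s1 (fixset tau \<inter> fixset sig2 \<inter> negset sig1). \<forall>b\<in>s2. br a b = 0"
  shows
    "let L = twisted_laurent (fixset tau \<inter> fixset sig1) (fixset tau \<inter> negset sig1);
         k1' = set_sum s2 (fixset tau \<inter> fixset sig1 \<inter> negset sig2);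
         k2' = set_sum s1 (fixset tau \<inter> fixset sig2 \<inter> negset sig1);
         Lplus = {xi \<in> L. (\<forall>j. xi (- j) = sig2 (xi j)) \<and> eval_one xi \<in> k2'};
         Lminus = {xi \<in> L. (\<forall>j>0. xi j = 0) \<and> xi 0 \<in> k1'}
     in laurent_subalgebra scale br L Lplus \<and> laurent_subalgebra scale br L Lminus \<and>
        (\<forall>A\<in>L. \<exists>!p. fst p \<in> Lplus \<and> snd p \<in> Lminus \<and> A = fst p + snd p)"
proof -
  interpret twisted_loop_splitting scale br tau sig1 sig2 s1 s2
  proof
    show "lie_algebra scale br" using g by (simp add: complex_simple_lie_algebra_def)
    show "real_subspace scale s1" using s1_ideal by (simp add: real_lie_ideal_of_def)
    show "real_subspace scale s2" using s2_ideal by (simp add: real_lie_ideal_of_def)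
  qed (fact tau sig1 sig2 comm12 comm2t k12_sum k1'_sub k2'_sub k1_sum k1_direct k2_sum k2_direct)+
  show ?thesis unfolding Let_def by (rule splitting)
qed

end
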